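(* Let $m,n,w,d,l$ be positive integers with $w\le m$. Let $n_0=n>n_1>\dots>n_{l-1}$ be a decreasing sequence of positive integers such that for all $1\le i\le l-1$: $n_i$ divides $nw$ and $\frac{nw}{m}\le n_i\le\left(1-\frac{d}{nw}\right)n_{i-1}$. Put $w_i=\frac{nw}{n_i}$. Then $$\sum_{i=0}^{l-1}B(n,n_i,d)\,A(m,n_i,w_i,d)\le B(mn,nw,d).$$
   Context: $J(m,w)$ denotes the set of binary vectors of length $m$ and Hamming weight $w$. Elements of $J(m,w)^n$ are identified with $m\times n$ binary matrices all of whose columns have weight $w$, with binary Hamming distance. $A(m,n,w,d)$ is the maximum cardinality of a nonempty subset of $J(m,w)^n$ with pairwise Hamming distances at least $2d$. $B(N,W,d)$ is the maximum cardinality of a nonempty subset of $J(N,W)$ with pairwise Hamming distances at least $2d$. *)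

theory Defs
  imports Complex_Main "HOL-Library.FuncSet"
begin

text \<open>Binary vectors of length N are identified with their supports, i.e. subsets
of {0..<N}; the Hamming weight is the cardinality and the Hamming distance is the
cardinality of the symmetric difference.\<close>

definition J :: "nat \<Rightarrow> nat \<Rightarrow> nat set set" where
  "J N W = {S. S \<subseteq> {..<N} \<and> card S = W}"

definition hdist :: "nat set \<Rightarrow> nat set \<Rightarrow> nat" where
  "hdist S T = card ((S - T) \<union> (T - S))"

text \<open>Elements of J(m,w)^n: n-tuples of columns (functions on {0..<n}, extensional),
i.e. m x n binary matrices with all columns of weight w.\<close>

definition Jpow :: "nat \<Rightarrow> nat \<Rightarrow> nat \<Rightarrow> (nat \<Rightarrow> nat set) set" where
  "Jpow m w n = PiE {..<n} (\<lambda>_. J m w)"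

definition mdist :: "nat \<Rightarrow> (nat \<Rightarrow> nat set) \<Rightarrow> (nat \<Rightarrow> nat set) \<Rightarrow> nat" where
  "mdist n X Y = (\<Sum>j<n. hdist (X j) (Y j))"

definition A :: "nat \<Rightarrow> nat \<Rightarrow> nat \<Rightarrow> nat \<Rightarrow> nat" where
  "A m n w d = Max {card C | C. C \<subseteq> Jpow m w n \<and> C \<noteq> {} \<and>
      (\<forall>X\<in>C. \<forall>Y\<in>C. X \<noteq> Y \<longrightarrow> mdist n X Y \<ge> 2 * d)}"

definition B :: "nat \<Rightarrow> nat \<Rightarrow> nat \<Rightarrow> nat" where
  "B N W d = Max {card C | C. C \<subseteq> J N W \<and> C \<noteq> {} \<and>
      (\<forall>S\<in>C. \<forall>T\<in>C. S \<noteq> T \<longrightarrow> hdist S T \<ge> 2 * d)}"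

end

(*
  Take optimal codes C_i in J(n, n_i) and D_i in J(m, w_i)^(n_i).  A pair (S, X) in C_i x D_i
  gives the m x n matrix whose columns indexed by S are the columns of X and whose other columns
  are zero; it has weight n_i w_i = nw, so it is a word of J(mn, nw).  Two words of the same level
  i are at distance at least 2d: either they share the support S and differ in X, or S and S'
  are at distance at least 2d and each column in which they differ contributes w_i >= 1.  Two words of levels
  i < j have at most w_i n_j <= nw - d common ones, by n_j <= (1 - d/(nw)) n_i, so they are at
  distance at least 2d as well.
*)

theory Submission
  imports Defs
begin

lemma hdist_add_card_Int:
  assumes "finite S" "finite T"
  shows "hdist S T + 2 * card (S \<inter> T) = card S + card T"
proof -
  have "(S - T) \<union> (T - S) = (S \<union> T) - (S \<inter> T)" by blast
  then have "hdist S T = card (S \<union> T) - card (S \<inter> T)"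
    unfolding hdist_def using assms by (auto intro: card_Diff_subset)
  moreover have "card (S \<inter> T) \<le> card (S \<union> T)"
    using assms by (intro card_mono) auto
  ultimately show ?thesis
    using card_Un_Int[OF assms] by linarith
qed

lemma hdist_commute: "hdist S T = hdist T S"
  unfolding hdist_def by (simp add: Un_commute)

lemma J_subset: "S \<in> J N W \<Longrightarrow> S \<subseteq> {..<N}"
  and card_J: "S \<in> J N W \<Longrightarrow> card S = W"
  and finite_J_member: "S \<in> J N W \<Longrightarrow> finite S"
  unfolding J_def by (auto intro: finite_subset)

lemma finite_J: "finite (J N W)"
  unfolding J_def by (rule finite_subset[of _ "Pow {..<N}"]) auto

lemma finite_Jpow: "finite (Jpow m w n)"
  unfolding Jpow_def by (simp add: finite_PiE finite_J)

lemma lessThan_in_J: "W \<le> N \<Longrightarrow> {..<W} \<in> J N W"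
  unfolding J_def by auto

definition constant_weight_code :: "nat \<Rightarrow> nat \<Rightarrow> nat \<Rightarrow> nat set set \<Rightarrow> bool" where
  "constant_weight_code N W d C \<longleftrightarrow>
     C \<subseteq> J N W \<and> C \<noteq> {} \<and> (\<forall>S\<in>C. \<forall>T\<in>C. S \<noteq> T \<longrightarrow> 2 * d \<le> hdist S T)"

definition matrix_code :: "nat \<Rightarrow> nat \<Rightarrow> nat \<Rightarrow> nat \<Rightarrow> (nat \<Rightarrow> nat set) set \<Rightarrow> bool" where
  "matrix_code m n w d C \<longleftrightarrow>
     C \<subseteq> Jpow m w n \<and> C \<noteq> {} \<and> (\<forall>X\<in>C. \<forall>Y\<in>C. X \<noteq> Y \<longrightarrow> 2 * d \<le> mdist n X Y)"

lemma B_eq_Max: "B N W d = Max {card C | C. constant_weight_code N W d C}"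
  unfolding B_def constant_weight_code_def ..

lemma A_eq_Max: "A m n w d = Max {card C | C. matrix_code m n w d C}"
  unfolding A_def matrix_code_def ..

lemma card_le_Max_card:
  assumes "finite U" "\<And>C. P C \<Longrightarrow> C \<subseteq> U" "P C"
  shows "card C \<le> Max {card C | C. P C}"
proof (rule Max_ge)
  show "finite {card C | C. P C}"
    by (rule finite_subset[of _ "{..card U}"]) (use assms in \<open>auto intro: card_mono\<close>)
qed (use assms(3) in blast)

lemma Max_card_attained:
  assumes "finite U" "\<And>C. P C \<Longrightarrow> C \<subseteq> U" "P C\<^sub>0"
  obtains C where "P C" "card C = Max {card C | C. P C}"
proof -
  have "finite {card C | C. P C}"
    by (rule finite_subset[of _ "{..card U}"]) (use assms in \<open>auto intro: card_mono\<close>)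
  moreover have "{card C | C. P C} \<noteq> {}" using assms(3) by blast
  ultimately have "Max {card C | C. P C} \<in> {card C | C. P C}" by (rule Max_in)
  then obtain C where "P C" "Max {card C | C. P C} = card C" by blast
  then show ?thesis by (intro that) simp_all
qed

lemma card_le_B: "constant_weight_code N W d C \<Longrightarrow> card C \<le> B N W d"
  unfolding B_eq_Max by (rule card_le_Max_card[OF finite_J]) (auto simp: constant_weight_code_def)

lemma optimal_constant_weight_codes:
  assumes "\<And>i. i \<in> I \<Longrightarrow> W i \<le> N"
  obtains C
  where "\<And>i. i \<in> I \<Longrightarrow> constant_weight_code N (W i) d (C i) \<and> card (C i) = B N (W i) d"
proof -
  have "\<exists>C. constant_weight_code N (W i) d C \<and> card C = B N (W i) d" if "i \<in> I" for i
  proof (rule Max_card_attained[OF finite_J])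
    show "constant_weight_code N (W i) d {{..<W i}}"
      using lessThan_in_J[OF assms[OF that]] by (simp add: constant_weight_code_def)
  qed (auto simp: constant_weight_code_def B_eq_Max)
  then have "\<forall>i\<in>I. \<exists>C. constant_weight_code N (W i) d C \<and> card C = B N (W i) d" by blast
  from bchoice[OF this] show ?thesis using that by blast
qed

lemma optimal_matrix_codes:
  assumes "\<And>i. i \<in> I \<Longrightarrow> w i \<le> m"
  obtains C
  where "\<And>i. i \<in> I \<Longrightarrow> matrix_code m (n i) (w i) d (C i) \<and> card (C i) = A m (n i) (w i) d"
proof -
  have "\<exists>C. matrix_code m (n i) (w i) d C \<and> card C = A m (n i) (w i) d" if "i \<in> I" for i
  proof (rule Max_card_attained[OF finite_Jpow])
    show "matrix_code m (n i) (w i) d {\<lambda>j\<in>{..<n i}. {..<w i}}"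
      using lessThan_in_J[OF assms[OF that]] by (simp add: matrix_code_def Jpow_def)
  qed (auto simp: matrix_code_def A_eq_Max)
  then have "\<forall>i\<in>I. \<exists>C. matrix_code m (n i) (w i) d C \<and> card C = A m (n i) (w i) d" by blast
  from bchoice[OF this] show ?thesis using that by blast
qed

text \<open>Subsets of {..<m*n} are read as m x n matrices, with c * m + r the cell in row r of
  column c.  Intersecting with {..<m} keeps the columns Z c from overlapping without any side
  condition on Z.\<close>

definition blocks :: "nat \<Rightarrow> nat set \<Rightarrow> (nat \<Rightarrow> nat set) \<Rightarrow> nat set" where
  "blocks m S Z = (\<lambda>(c, r). c * m + r) ` (SIGMA c:S. Z c \<inter> {..<m})"

lemma block_index_eq_iff:
  fixes c c' r r' m :: nat
  assumes "r < m" "r' < m"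
  shows "c * m + r = c' * m + r' \<longleftrightarrow> c = c' \<and> r = r'"
proof
  assume eq: "c * m + r = c' * m + r'"
  have "c = (c * m + r) div m" "c' = (c' * m + r') div m" using assms by simp_all
  with eq have "c = c'" by simp
  with eq show "c = c' \<and> r = r'" by simp
qed simp

lemma inj_on_block_index: "inj_on (\<lambda>(c, r). c * m + r) (UNIV \<times> {..<m::nat})"
  by (rule inj_onI) (auto simp: block_index_eq_iff)

lemma blocks_Un: "blocks m S Z \<union> blocks m S W = blocks m S (\<lambda>c. Z c \<union> W c)"
  unfolding blocks_def by blast

lemma blocks_Int: "blocks m S Z \<inter> blocks m T W = blocks m (S \<inter> T) (\<lambda>c. Z c \<inter> W c)"
  unfolding blocks_def by (auto simp: block_index_eq_iff)

lemma blocks_Diff: "blocks m S Z - blocks m S W = blocks m S (\<lambda>c. Z c - W c)"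
  unfolding blocks_def by (auto simp: block_index_eq_iff)

lemma card_blocks: "finite S \<Longrightarrow> card (blocks m S Z) = (\<Sum>c\<in>S. card (Z c \<inter> {..<m}))"
  unfolding blocks_def
  by (subst card_image) (auto intro: inj_on_subset[OF inj_on_block_index])

lemma blocks_subset_lessThan:
  assumes "S \<subseteq> {..<n}"
  shows "blocks m S Z \<subseteq> {..<m * n}"
proof
  fix x assume "x \<in> blocks m S Z"
  then obtain c r where x: "x = c * m + r" "c < n" "r < m"
    using assms unfolding blocks_def by auto
  have "c * m + r < (c + 1) * m" using x(3) by simp
  also have "\<dots> \<le> n * m" using x(2) by (intro mult_le_mono1) simp
  finally show "x \<in> {..<m * n}" using x(1) by (simp add: mult.commute)
qed

lemma hdist_blocks:
  "finite S \<Longrightarrow>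
    hdist (blocks m S Z) (blocks m S W) = (\<Sum>c\<in>S. hdist (Z c \<inter> {..<m}) (W c \<inter> {..<m}))"
  unfolding hdist_def blocks_Diff blocks_Un card_blocks by (simp add: Int_Un_distrib2 Diff_Int_distrib2)

text \<open>Any bijection of S onto its positions will do.\<close>

definition position :: "nat set \<Rightarrow> nat \<Rightarrow> nat" where
  "position S = (SOME f. bij_betw f S {..<card S})"

lemma bij_betw_position:
  assumes "finite S"
  shows "bij_betw (position S) S {..<card S}"
proof -
  obtain f where "bij_betw f S {0..<card S}" using ex_bij_betw_finite_nat[OF assms] by blast
  then show ?thesis
    unfolding position_def atLeast0LessThan by (rule someI[of "\<lambda>f. bij_betw f S {..<card S}"])
qed

definition spread :: "nat \<Rightarrow> nat set \<Rightarrow> (nat \<Rightarrow> nat set) \<Rightarrow> nat set" where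
  "spread m S X = blocks m S (\<lambda>c. X (position S c))"

lemma spread_column:
  assumes "finite S" "X \<in> Jpow m w (card S)" "c \<in> S"
  shows "X (position S c) \<inter> {..<m} = X (position S c)" "card (X (position S c)) = w"
proof -
  have "position S c < card S" using bij_betwE[OF bij_betw_position[OF assms(1)]] assms(3) by blast
  then have "X (position S c) \<in> J m w" using assms(2) unfolding Jpow_def by (simp add: PiE_iff)
  then show "X (position S c) \<inter> {..<m} = X (position S c)" "card (X (position S c)) = w"
    unfolding J_def by auto
qed

lemma spread_in_J:
  assumes "S \<in> J n k" "X \<in> Jpow m w k"
  shows "spread m S X \<in> J (m * n) (k * w)"
proof -
  have S: "finite S" "card S = k" using assms(1) by (simp_all add: finite_J_member card_J)
  have "card (spread m S X) = (\<Sum>c\<in>S. w)"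
    unfolding spread_def card_blocks[OF S(1)]
    using spread_column[OF S(1)] assms(2) S(2) by (intro sum.cong) simp_all
  moreover have "spread m S X \<subseteq> {..<m * n}"
    unfolding spread_def using J_subset[OF assms(1)] by (rule blocks_subset_lessThan)
  ultimately show ?thesis using S by (simp add: J_def)
qed

lemma hdist_spread_same_support:
  assumes "S \<in> J n k" "X \<in> Jpow m w k" "Y \<in> Jpow m w k"
  shows "hdist (spread m S X) (spread m S Y) = mdist k X Y"
proof -
  have S: "finite S" "card S = k" using assms(1) by (simp_all add: finite_J_member card_J)
  have "hdist (spread m S X) (spread m S Y) = (\<Sum>c\<in>S. hdist (X (position S c)) (Y (position S c)))"
    unfolding spread_def hdist_blocks[OF S(1)]
    using spread_column(1)[OF S(1)] assms(2,3) S(2) by (intro sum.cong) simp_all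
  also have "\<dots> = (\<Sum>j<k. hdist (X j) (Y j))"
    using sum.reindex_bij_betw[OF bij_betw_position[OF S(1)]] S(2) by simp
  finally show ?thesis unfolding mdist_def .
qed

lemma hdist_spread_lower_bound:
  assumes "S \<in> J n k" "X \<in> Jpow m w k" "S' \<in> J n k'" "X' \<in> Jpow m w' k'"
  shows "k * w + k' * w' \<le> hdist (spread m S X) (spread m S' X') + 2 * (w * card (S \<inter> S'))"
proof -
  have S: "finite S" "card S = k" using assms(1) by (simp_all add: finite_J_member card_J)
  have "card (spread m S X \<inter> spread m S' X')
      = (\<Sum>c\<in>S \<inter> S'. card (X (position S c) \<inter> X' (position S' c) \<inter> {..<m}))"
    unfolding spread_def blocks_Int using S(1) by (simp add: card_blocks)
  also have "\<dots> \<le> (\<Sum>c\<in>S \<inter> S'. card (X (position S c) \<inter> {..<m}))"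
    by (intro sum_mono card_mono) auto
  also have "\<dots> = w * card (S \<inter> S')"
  proof -
    have "(\<Sum>c\<in>S \<inter> S'. card (X (position S c) \<inter> {..<m})) = (\<Sum>c\<in>S \<inter> S'. w)"
      using spread_column[OF S(1)] assms(2) S(2) by (intro sum.cong) simp_all
    then show ?thesis by (simp add: mult.commute)
  qed
  finally have "card (spread m S X \<inter> spread m S' X') \<le> w * card (S \<inter> S')" .
  moreover have "card (spread m S X) = k * w" "card (spread m S' X') = k' * w'"
    using spread_in_J[OF assms(1,2)] spread_in_J[OF assms(3,4)] by (simp_all add: card_J)
  moreover have "hdist (spread m S X) (spread m S' X') + 2 * card (spread m S X \<inter> spread m S' X')
      = card (spread m S X) + card (spread m S' X')"
    using spread_in_J[OF assms(1,2)] spread_in_J[OF assms(3,4)]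
    by (intro hdist_add_card_Int) (simp_all add: finite_J_member)
  ultimately show ?thesis by linarith
qed

lemma constant_weight_code_member:
    "constant_weight_code N W d C \<Longrightarrow> S \<in> C \<Longrightarrow> S \<in> J N W"
  and matrix_code_member:
    "matrix_code m n w d C' \<Longrightarrow> X \<in> C' \<Longrightarrow> X \<in> Jpow m w n"
  unfolding constant_weight_code_def matrix_code_def by blast+

lemma spread_dist_same_length:
  assumes CB: "constant_weight_code n k d CB" and CA: "matrix_code m k w d CA" and "0 < w"
    and "S \<in> CB" "X \<in> CA" "S' \<in> CB" "X' \<in> CA" "(S, X) \<noteq> (S', X')"
  shows "2 * d \<le> hdist (spread m S X) (spread m S' X')"
proof -
  have S: "S \<in> J n k" "S' \<in> J n k" and X: "X \<in> Jpow m w k" "X' \<in> Jpow m w k"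
    using assms(4-7) constant_weight_code_member[OF CB] matrix_code_member[OF CA] by blast+
  show ?thesis
  proof (cases "S = S'")
    case True
    with assms(8) have "X \<noteq> X'" by simp
    with CA assms(5,7) have "2 * d \<le> mdist k X X'" unfolding matrix_code_def by blast
    with True show ?thesis using hdist_spread_same_support[OF S(1) X] by simp
  next
    case False
    with CB assms(4,6) have "2 * d \<le> hdist S S'" unfolding constant_weight_code_def by blast
    moreover have "hdist S S' + 2 * card (S \<inter> S') = k + k"
      using S by (simp add: hdist_add_card_Int finite_J_member card_J)
    ultimately have "card (S \<inter> S') + d \<le> k" by linarith
    then have "w * card (S \<inter> S') + w * d \<le> w * k"
      using mult_le_mono2 add_mult_distrib2 by metis
    moreover have "2 * (w * k) \<le> hdist (spread m S X) (spread m S' X') + 2 * (w * card (S \<inter> S'))"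
      using hdist_spread_lower_bound[OF S(1) X(1) S(2) X(2)] by (simp add: mult.commute)
    moreover have "d \<le> w * d" using \<open>0 < w\<close> by simp
    ultimately show ?thesis by linarith
  qed
qed

lemma spread_dist_different_lengths:
  assumes "S \<in> J n k" "X \<in> Jpow m w k" "S' \<in> J n k'" "X' \<in> Jpow m w' k'"
    and "k * w = N" "k' * w' = N" "w * k' + d \<le> N"
  shows "2 * d \<le> hdist (spread m S X) (spread m S' X')"
proof -
  have "card (S \<inter> S') \<le> k'"
    using assms(3) card_mono[OF finite_J_member[OF assms(3)], of "S \<inter> S'"] by (simp add: card_J)
  then have "w * card (S \<inter> S') \<le> w * k'" by simp
  with hdist_spread_lower_bound[OF assms(1-4)] assms(5-7) show ?thesis by linarith
qed

lemma spread_dist_levels: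
  fixes k w :: "nat \<Rightarrow> nat" and CB :: "nat \<Rightarrow> nat set set"
    and CA :: "nat \<Rightarrow> (nat \<Rightarrow> nat set) set"
  assumes codes: "\<And>i. i < l \<Longrightarrow>
      constant_weight_code n (k i) d (CB i) \<and> matrix_code m (k i) (w i) d (CA i)"
    and weights: "\<And>i. i < l \<Longrightarrow> k i * w i = N \<and> 0 < w i"
    and separated: "\<And>i j. i < j \<Longrightarrow> j < l \<Longrightarrow> w i * k j + d \<le> N"
    and "i < l" "S \<in> CB i" "X \<in> CA i" "i' < l" "S' \<in> CB i'" "X' \<in> CA i'"
    and "(i, S, X) \<noteq> (i', S', X')"
  shows "2 * d \<le> hdist (spread m S X) (spread m S' X')"
proof -
  have S: "S \<in> J n (k i)" "S' \<in> J n (k i')"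
    and X: "X \<in> Jpow m (w i) (k i)" "X' \<in> Jpow m (w i') (k i')"
    using assms(4-9) codes constant_weight_code_member matrix_code_member by blast+
  consider "i = i'" | "i < i'" | "i' < i" by linarith
  then show ?thesis
  proof cases
    case 1
    with assms(10) have "(S, X) \<noteq> (S', X')" by simp
    with 1 show ?thesis
      using spread_dist_same_length[of n "k i" d "CB i" m "w i" "CA i"] codes[OF \<open>i < l\<close>]
        weights[OF \<open>i < l\<close>] assms(5,6,8,9) by simp
  next
    case 2
    then show ?thesis
      using spread_dist_different_lengths[OF S(1) X(1) S(2) X(2)] weights assms(4,7) separated
      by blast
  next
    case 3
    then have "2 * d \<le> hdist (spread m S' X') (spread m S X)"
      using spread_dist_different_lengths[OF S(2) X(2) S(1) X(1)] weights assms(4,7) separated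
      by blast
    then show ?thesis by (simp add: hdist_commute)
  qed
qed

lemma sum_card_spread_codes_le_B:
  fixes k w :: "nat \<Rightarrow> nat" and CB :: "nat \<Rightarrow> nat set set"
    and CA :: "nat \<Rightarrow> (nat \<Rightarrow> nat set) set"
  assumes codes: "\<And>i. i < l \<Longrightarrow>
      constant_weight_code n (k i) d (CB i) \<and> matrix_code m (k i) (w i) d (CA i)"
    and weights: "\<And>i. i < l \<Longrightarrow> k i * w i = N \<and> 0 < w i"
    and separated: "\<And>i j. i < j \<Longrightarrow> j < l \<Longrightarrow> w i * k j + d \<le> N"
    and "0 < d" "0 < l"
  shows "(\<Sum>i<l. card (CB i) * card (CA i)) \<le> B (m * n) N d"
proof -
  define T where "T = (SIGMA i:{..<l}. CB i \<times> CA i)"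
  define word :: "nat \<times> nat set \<times> (nat \<Rightarrow> nat set) \<Rightarrow> nat set"
    where "word = (\<lambda>(i, S, X). spread m S X)"
  have far: "2 * d \<le> hdist (word p) (word q)" if "p \<in> T" "q \<in> T" "p \<noteq> q" for p q
  proof -
    obtain i S X i' S' X' where "p = (i, S, X)" "q = (i', S', X')" by (cases p, cases q) blast
    with that show ?thesis
      using spread_dist_levels[where l = l and k = k and w = w and CB = CB and CA = CA and N = N,
          OF codes weights separated]
      unfolding T_def word_def by (simp; blast)
  qed
  have "inj_on word T"
  proof (rule inj_onI, rule ccontr)
    fix p q assume "p \<in> T" "q \<in> T" "word p = word q" "p \<noteq> q"
    then have "2 * d \<le> hdist (word q) (word q)" using far[of p q] by simp
    with \<open>0 < d\<close> show False by (simp add: hdist_def)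
  qed
  have finite: "finite (CB i)" "finite (CA i)" if "i < l" for i
    using codes[OF that] unfolding constant_weight_code_def matrix_code_def
    by (auto intro: finite_subset[OF _ finite_J] finite_subset[OF _ finite_Jpow])
  have "word ` T \<subseteq> J (m * n) N"
  proof
    fix U assume "U \<in> word ` T"
    then obtain i S X where "i < l" "S \<in> CB i" "X \<in> CA i" "U = spread m S X"
      unfolding T_def word_def by auto
    then show "U \<in> J (m * n) N"
      using spread_in_J codes weights constant_weight_code_member matrix_code_member by metis
  qed
  moreover have "T \<noteq> {}"
    using codes[OF \<open>0 < l\<close>] \<open>0 < l\<close>
    unfolding T_def constant_weight_code_def matrix_code_def by blast
  ultimately have code: "constant_weight_code (m * n) N d (word ` T)"
    unfolding constant_weight_code_def using far by blast
  have "(\<Sum>i<l. card (CB i) * card (CA i)) = card T"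
    unfolding T_def using finite by (simp add: card_cartesian_product)
  also have "\<dots> = card (word ` T)" using \<open>inj_on word T\<close> by (simp add: card_image)
  also have "\<dots> \<le> B (m * n) N d" using code by (rule card_le_B)
  finally show ?thesis .
qed

lemma le_of_decreasing_prefix:
  fixes f :: "nat \<Rightarrow> nat"
  assumes "\<forall>i. i + 1 < l \<longrightarrow> f (i + 1) < f i" "i \<le> j" "j < l"
  shows "f j \<le> f i"
  using assms(2,3)
proof (induction j)
  case (Suc j)
  show ?case
  proof (cases "i = Suc j")
    case False
    with Suc.prems have "f j \<le> f i" by (intro Suc.IH) simp_all
    moreover have "f (Suc j) < f j" using assms(1) Suc.prems(2) by simp
    ultimately show ?thesis by simp
  qed simp
qed simp

lemma weight_le_of_length_ge:
  assumes "k * w = N" "real N / real m \<le> real k" "0 < m" "0 < k"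
  shows "w \<le> m"
proof -
  have "real N \<le> real m * real k" using assms(2,3) by (simp add: divide_le_eq mult.commute)
  then have "k * w \<le> k * m" using assms(1) by (metis mult.commute of_nat_le_iff of_nat_mult)
  then show ?thesis using assms(4) by simp
qed

lemma separation_of_shrinking_lengths:
  assumes "k * w = N" "0 < N" "0 < k'" "real k' \<le> (1 - real d / real N) * real k''" "k'' \<le> k"
  shows "w * k' + d \<le> N"
proof -
  have "0 < 1 - real d / real N"
  proof (rule ccontr)
    assume "\<not> ?thesis"
    then have "(1 - real d / real N) * real k'' \<le> 0" by (simp add: mult_nonpos_nonneg)
    with assms(3,4) show False by simp
  qed
  then have "real k' \<le> (1 - real d / real N) * real k"
    using assms(4,5) by (meson mult_left_mono of_nat_le_iff order_trans less_imp_le)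
  then have "real w * real k' \<le> (1 - real d / real N) * (real k * real w)"
    by (metis mult.commute mult.left_commute mult_left_mono of_nat_0_le_iff)
  also have "\<dots> = real N - real d"
    using assms(1,2) by (simp add: field_simps flip: of_nat_mult)
  finally have "real (w * k' + d) \<le> real N" by simp
  then show ?thesis by (simp only: of_nat_le_iff)
qed

theorem proposition7:
  fixes m n w d l :: nat and ns :: "nat \<Rightarrow> nat"
  assumes "0 < m" "0 < n" "0 < w" "0 < d" "0 < l" "w \<le> m"
    and "ns 0 = n"
    and "\<forall>i. i + 1 < l \<longrightarrow> ns (i + 1) < ns i"
    and "\<forall>i<l. 0 < ns i"
    and "\<forall>i. 1 \<le> i \<and> i \<le> l - 1 \<longrightarrow>
           ns i dvd n * w \<and>
           real (n * w) / real m \<le> real (ns i) \<and>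
           real (ns i) \<le> (1 - real d / real (n * w)) * real (ns (i - 1))"
  shows "(\<Sum>i<l. B n (ns i) d * A m (ns i) (n * w div ns i) d) \<le> B (m * n) (n * w) d"
proof -
  define wt where "wt i = n * w div ns i" for i
  have shorter: "ns j \<le> ns i" if "i \<le> j" "j < l" for i j
    using le_of_decreasing_prefix[OF assms(8) that] .
  have column: "ns i * wt i = n * w \<and> 0 < wt i \<and> wt i \<le> m \<and> ns i \<le> n" if "i < l" for i
  proof -
    have "ns i * wt i = n * w \<and> real (n * w) / real m \<le> real (ns i)"
    proof (cases "i = 0")
      case True
      with assms(1,2,6,7) show ?thesis by (simp add: wt_def divide_le_eq)
    next
      case False
      with assms(10) that show ?thesis by (simp add: wt_def)
    qed
    moreover have "0 < ns i" "ns i \<le> n" using assms(7,9) shorter[of 0 i] that by simp_all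
    ultimately show ?thesis
      using weight_le_of_length_ge[of "ns i" "wt i" "n * w" m] assms(1-3) by (auto intro: gr0I)
  qed
  have separated: "wt i * ns j + d \<le> n * w" if "i < j" "j < l" for i j
    using separation_of_shrinking_lengths[of "ns i" "wt i" "n * w" "ns j" d "ns (j - 1)"]
      column[of i] shorter[of i "j - 1"] assms(2,3,9,10) that by simp
  obtain CB where CB: "\<And>i. i \<in> {..<l} \<Longrightarrow>
      constant_weight_code n (ns i) d (CB i) \<and> card (CB i) = B n (ns i) d"
    using optimal_constant_weight_codes[of "{..<l}" ns n] column by auto
  obtain CA where CA: "\<And>i. i \<in> {..<l} \<Longrightarrow>
      matrix_code m (ns i) (wt i) d (CA i) \<and> card (CA i) = A m (ns i) (wt i) d"
    using optimal_matrix_codes[of "{..<l}" wt m] column by auto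
  have "(\<Sum>i<l. card (CB i) * card (CA i)) \<le> B (m * n) (n * w) d"
    using CB CA column separated assms(4,5) by (intro sum_card_spread_codes_le_B) auto
  moreover have "(\<Sum>i<l. card (CB i) * card (CA i)) = (\<Sum>i<l. B n (ns i) d * A m (ns i) (wt i) d)"
    using CB CA by (intro sum.cong) simp_all
  ultimately show ?thesis unfolding wt_def by simp
qed

end
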